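(* Let $\tau$ be a continuous distributive triangle function on $\Delta^+$, $\Sigma$ a $\sigma$-ring of subsets of $\Omega\ne\emptyset$, $\gamma$ a $\tau$-decomposable measure on $\Sigma$ continuous from below, $E\in\Sigma$, and $f,g:\Omega\to[0,+\infty]$ measurable functions that are $\gamma$-integrable on $E$ and satisfy $f=g$ a.e. on $E$. Then $\int_E f\,d\gamma=\int_E g\,d\gamma$.
   Context: $\Delta^+$: functions $F:[-\infty,+\infty]\to[0,1]$ non-decreasing, left-continuous on $\mathbb{R}$, $F(x)=0$ for $x\le0$, $F(+\infty)=1$, ordered pointwise; $\varepsilon_a(x)=1$ if $x>a$, else $0$. Triangle function: symmetric, associative $\tau:\Delta^+\times\Delta^+\to\Delta^+$, non-decreasing in each variable, identity $\varepsilon_0$; $G\oplus H=\tau(G,H)$, $\bigoplus_{k=1}^nG_k=\tau(G_1,\bigoplus_{k=2}^nG_k)$. $c\odot G=\varepsilon_0$ if $c=0$, $(c\odot G)(x)=G(x/c)$ if $c>0$; $\tau$ distributive if $c\odot(G\oplus H)=(c\odot G)\oplus(c\odot H)$ for all $c\ge0$. Convergence in $\Delta^+$ is weak convergence; $\tau$ continuous if continuous for it. $\tau$-decomposable measure on a ring $\Sigma$: $\gamma:\Sigma\to\Delta^+$, $\gamma_\emptyset=\varepsilon_0$, $\gamma_{E\cup F}=\tau(\gamma_E,\gamma_F)$ for disjoint $E,F$; continuous from below: $\gamma_{E_n}\to\gamma_E$ whenever $E_n\subseteq E_{n+1}$, $\bigcup E_n=E$ in $\Sigma$. A set $F\in\Sigma$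 is $\gamma$-null if $\gamma_F=\varepsilon_0$. $f=g$ a.e. on $S$ means there is a $\gamma$-null $F$ with $f(x)=g(x)$ for all $x\in S\setminus F$. Simple function $\sum_{i=1}^nx_i\chi_{E_i}$ ($x_i\in[0,\infty)$, $E_i\in\Sigma$ pairwise disjoint), $\int_Ef\,d\gamma=\bigoplus_ix_i\odot\gamma_{E\cap E_i}$. Measurable: pointwise limit of simple functions. $\mathcal S_{f,E}$: simple $\mathfrak f\le f$ on $E$. $f$ is $\gamma$-integrable on $E$ if some $H\in\Delta^+$ satisfies $\int_E\mathfrak f\,d\gamma\ge H$ for all $\mathfrak f\in\mathcal S_{f,E}$; then $\int_Ef\,d\gamma=\inf\{\int_E\mathfrak f\,d\gamma:\mathfrak f\in\mathcal S_{f,E}\}$ in $(\Delta^+,\le)$. *)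

theory Defs
  imports "HOL-Analysis.Analysis"
begin

type_synonym dfun = "ereal \<Rightarrow> real"

definition Delta_plus :: "dfun set" where
  "Delta_plus = {F. mono F
      \<and> (\<forall>x::real. continuous (at_left x) (\<lambda>y::real. F (ereal y)))
      \<and> (\<forall>x. x \<le> 0 \<longrightarrow> F x = 0)
      \<and> F \<infinity> = 1
      \<and> (\<forall>x. 0 \<le> F x \<and> F x \<le> 1)}"

definition eps :: "real \<Rightarrow> dfun" where
  "eps a = (\<lambda>x. if x > ereal a then 1 else 0)"

definition smult :: "real \<Rightarrow> dfun \<Rightarrow> dfun" where
  "smult c G = (if c = 0 then eps 0 else (\<lambda>x. G (x / ereal c)))"

definition triangle_function :: "(dfun \<Rightarrow> dfun \<Rightarrow> dfun) \<Rightarrow> bool" where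
  "triangle_function \<tau> \<longleftrightarrow>
     (\<forall>F\<in>Delta_plus. \<forall>G\<in>Delta_plus. \<tau> F G \<in> Delta_plus)
   \<and> (\<forall>F\<in>Delta_plus. \<forall>G\<in>Delta_plus. \<tau> F G = \<tau> G F)
   \<and> (\<forall>F\<in>Delta_plus. \<forall>G\<in>Delta_plus. \<forall>H\<in>Delta_plus. \<tau> F (\<tau> G H) = \<tau> (\<tau> F G) H)
   \<and> (\<forall>F\<in>Delta_plus. \<forall>F'\<in>Delta_plus. \<forall>G\<in>Delta_plus.
         F \<le> F' \<longrightarrow> \<tau> F G \<le> \<tau> F' G \<and> \<tau> G F \<le> \<tau> G F')
   \<and> (\<forall>F\<in>Delta_plus. \<tau> F (eps 0) = F)"

definition distributive_tf :: "(dfun \<Rightarrow> dfun \<Rightarrow> dfun) \<Rightarrow> bool" where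
  "distributive_tf \<tau> \<longleftrightarrow>
     (\<forall>c::real. c \<ge> 0 \<longrightarrow> (\<forall>G\<in>Delta_plus. \<forall>H\<in>Delta_plus.
        smult c (\<tau> G H) = \<tau> (smult c G) (smult c H)))"

definition weak_conv :: "(nat \<Rightarrow> dfun) \<Rightarrow> dfun \<Rightarrow> bool" where
  "weak_conv Fs F \<longleftrightarrow>
     (\<forall>x::real. isCont (\<lambda>y::real. F (ereal y)) x \<longrightarrow>
        (\<lambda>n. Fs n (ereal x)) \<longlonglongrightarrow> F (ereal x))"

definition continuous_tf :: "(dfun \<Rightarrow> dfun \<Rightarrow> dfun) \<Rightarrow> bool" where
  "continuous_tf \<tau> \<longleftrightarrow>
     (\<forall>Fs Gs F G. (\<forall>n. Fs n \<in> Delta_plus \<and> Gs n \<in> Delta_plus) \<and> F \<in> Delta_plus \<and> G \<in> Delta_plus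
        \<and> weak_conv Fs F \<and> weak_conv Gs G
        \<longrightarrow> weak_conv (\<lambda>n. \<tau> (Fs n) (Gs n)) (\<tau> F G))"

definition sigma_ring :: "'a set \<Rightarrow> 'a set set \<Rightarrow> bool" where
  "sigma_ring \<Omega> S \<longleftrightarrow> ring_of_sets \<Omega> S
     \<and> (\<forall>A::nat \<Rightarrow> 'a set. range A \<subseteq> S \<longrightarrow> (\<Union>n. A n) \<in> S)"

definition decomposable_measure ::
    "(dfun \<Rightarrow> dfun \<Rightarrow> dfun) \<Rightarrow> 'a set set \<Rightarrow> ('a set \<Rightarrow> dfun) \<Rightarrow> bool" where
  "decomposable_measure \<tau> S \<gamma> \<longleftrightarrow>
     (\<forall>E\<in>S. \<gamma> E \<in> Delta_plus) \<and> \<gamma> {} = eps 0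
   \<and> (\<forall>E\<in>S. \<forall>F\<in>S. E \<inter> F = {} \<longrightarrow> \<gamma> (E \<union> F) = \<tau> (\<gamma> E) (\<gamma> F))"

definition continuous_from_below :: "'a set set \<Rightarrow> ('a set \<Rightarrow> dfun) \<Rightarrow> bool" where
  "continuous_from_below S \<gamma> \<longleftrightarrow>
     (\<forall>A::nat \<Rightarrow> 'a set. (\<forall>n. A n \<in> S) \<and> (\<forall>n. A n \<subseteq> A (Suc n)) \<and> (\<Union>n. A n) \<in> S
        \<longrightarrow> weak_conv (\<lambda>n. \<gamma> (A n)) (\<gamma> (\<Union>n. A n)))"

text \<open>A simple function is given by a representation: a list of pairs (x_i, E_i).\<close>
definition simple_rep :: "'a set set \<Rightarrow> (real \<times> 'a set) list \<Rightarrow> bool" where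
  "simple_rep S r \<longleftrightarrow> (\<forall>(x, A)\<in>set r. 0 \<le> x \<and> A \<in> S)
     \<and> (\<forall>i j. i < length r \<longrightarrow> j < length r \<longrightarrow> i \<noteq> j \<longrightarrow> snd (r ! i) \<inter> snd (r ! j) = {})"

definition sfun :: "(real \<times> 'a set) list \<Rightarrow> 'a \<Rightarrow> real" where
  "sfun r \<omega> = (\<Sum>(x, A)\<leftarrow>r. x * indicator A \<omega>)"

fun oplus :: "(dfun \<Rightarrow> dfun \<Rightarrow> dfun) \<Rightarrow> dfun list \<Rightarrow> dfun" where
  "oplus \<tau> [] = eps 0"
| "oplus \<tau> (G # Gs) = \<tau> G (oplus \<tau> Gs)"

definition simple_int ::
    "(dfun \<Rightarrow> dfun \<Rightarrow> dfun) \<Rightarrow> ('a set \<Rightarrow> dfun) \<Rightarrow> 'a set \<Rightarrow> (real \<times> 'a set) list \<Rightarrow> dfun" where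
  "simple_int \<tau> \<gamma> E r = oplus \<tau> (map (\<lambda>(x, A). smult x (\<gamma> (E \<inter> A))) r)"

definition measurable_fn :: "'a set \<Rightarrow> 'a set set \<Rightarrow> ('a \<Rightarrow> ennreal) \<Rightarrow> bool" where
  "measurable_fn \<Omega> S f \<longleftrightarrow>
     (\<exists>rs. (\<forall>n. simple_rep S (rs n)) \<and>
        (\<forall>\<omega>\<in>\<Omega>. (\<lambda>n. ennreal (sfun (rs n) \<omega>)) \<longlonglongrightarrow> f \<omega>))"

definition simple_ints ::
    "(dfun \<Rightarrow> dfun \<Rightarrow> dfun) \<Rightarrow> 'a set set \<Rightarrow> ('a set \<Rightarrow> dfun) \<Rightarrow> ('a \<Rightarrow> ennreal) \<Rightarrow> 'a set \<Rightarrow> dfun set" where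
  "simple_ints \<tau> S \<gamma> f E =
     {simple_int \<tau> \<gamma> E r | r. simple_rep S r \<and> (\<forall>\<omega>\<in>E. ennreal (sfun r \<omega>) \<le> f \<omega>)}"

definition gamma_integrable ::
    "(dfun \<Rightarrow> dfun \<Rightarrow> dfun) \<Rightarrow> 'a set set \<Rightarrow> ('a set \<Rightarrow> dfun) \<Rightarrow> ('a \<Rightarrow> ennreal) \<Rightarrow> 'a set \<Rightarrow> bool" where
  "gamma_integrable \<tau> S \<gamma> f E \<longleftrightarrow> (\<exists>H\<in>Delta_plus. \<forall>K\<in>simple_ints \<tau> S \<gamma> f E. H \<le> K)"

definition gamma_integral ::
    "(dfun \<Rightarrow> dfun \<Rightarrow> dfun) \<Rightarrow> 'a set set \<Rightarrow> ('a set \<Rightarrow> dfun) \<Rightarrow> ('a \<Rightarrow> ennreal) \<Rightarrow> 'a set \<Rightarrow> dfun" where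
  "gamma_integral \<tau> S \<gamma> f E =
     (THE H. H \<in> Delta_plus \<and> (\<forall>K\<in>simple_ints \<tau> S \<gamma> f E. H \<le> K)
        \<and> (\<forall>H'\<in>Delta_plus. (\<forall>K\<in>simple_ints \<tau> S \<gamma> f E. H' \<le> K) \<longrightarrow> H' \<le> H))"

definition ae_eq_on ::
    "'a set set \<Rightarrow> ('a set \<Rightarrow> dfun) \<Rightarrow> 'a set \<Rightarrow> ('a \<Rightarrow> ennreal) \<Rightarrow> ('a \<Rightarrow> ennreal) \<Rightarrow> bool" where
  "ae_eq_on S \<gamma> E f g \<longleftrightarrow> (\<exists>F\<in>S. \<gamma> F = eps 0 \<and> (\<forall>x\<in>E - F. f x = g x))"

end

theory Submission
  imports Defs
begin

text \<open>Removing a \<open>\<gamma>\<close>-null set \<open>F\<close> from the level sets of a simple function does not change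
  its integral, since \<open>\<gamma>(A - F) = \<gamma> A\<close> for a decomposable measure. So if \<open>f = g\<close> on \<open>E - F\<close>,
  every simple minorant \<open>\<Sum> x\<^sub>i \<chi>(A\<^sub>i)\<close> of \<open>f\<close> gives the simple minorant \<open>\<Sum> x\<^sub>i \<chi>(A\<^sub>i - F)\<close> of \<open>g\<close>
  with the same integral; thus \<open>f\<close> and \<open>g\<close> have the same set of simple integrals and hence the
  same infimum.\<close>

lemma eps_zero_in_Delta_plus: "eps 0 \<in> Delta_plus"
proof -
  have "continuous (at_left x) (\<lambda>y::real. eps 0 (ereal y))" for x :: real
  proof -
    have "eventually (\<lambda>y. eps 0 (ereal y) = eps 0 (ereal x)) (at_left x)"
      using eventually_at_left_real[of "if x \<le> 0 then x - 1 else 0" x]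
      by (auto simp: eps_def split: if_splits elim!: eventually_mono)
    then show ?thesis
      unfolding continuous_within by (rule tendsto_eventually)
  qed
  moreover have "mono (eps 0)"
    unfolding mono_def eps_def by (auto intro: less_le_trans)
  ultimately show ?thesis
    unfolding Delta_plus_def by (auto simp: eps_def zero_ereal_def[symmetric])
qed

lemma Delta_plus_le_eps_zero:
  assumes "F \<in> Delta_plus"
  shows "F \<le> eps 0"
proof (rule le_funI)
  fix x
  show "F x \<le> eps 0 x"
    using assms by (cases "x \<le> 0") (auto simp: Delta_plus_def eps_def not_le zero_ereal_def[symmetric])
qed

lemma decomposable_measure_antimono:
  assumes tf: "triangle_function \<tau>" and dm: "decomposable_measure \<tau> S \<gamma>"
    and ring: "ring_of_sets \<Omega> S" and A: "A \<in> S" and B: "B \<in> S" and "A \<subseteq> B"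
  shows "\<gamma> B \<le> \<gamma> A"
proof -
  have BA: "B - A \<in> S"
    using ring B A by (rule ring_of_sets.Diff)
  have \<gamma>A: "\<gamma> A \<in> Delta_plus" and \<gamma>BA: "\<gamma> (B - A) \<in> Delta_plus"
    using dm A BA by (auto simp: decomposable_measure_def)
  have "\<gamma> B = \<gamma> (A \<union> (B - A))"
    using \<open>A \<subseteq> B\<close> by (simp add: Un_absorb1)
  also have "\<dots> = \<tau> (\<gamma> A) (\<gamma> (B - A))"
    using dm A BA unfolding decomposable_measure_def by blast
  also have "\<dots> \<le> \<tau> (\<gamma> A) (eps 0)"
    using tf \<gamma>A \<gamma>BA eps_zero_in_Delta_plus Delta_plus_le_eps_zero[OF \<gamma>BA]
    unfolding triangle_function_def by blast
  also have "\<dots> = \<gamma> A"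
    using tf \<gamma>A unfolding triangle_function_def by blast
  finally show ?thesis .
qed

lemma decomposable_measure_null_subset:
  assumes tf: "triangle_function \<tau>" and dm: "decomposable_measure \<tau> S \<gamma>"
    and ring: "ring_of_sets \<Omega> S" and A: "A \<in> S" and B: "B \<in> S" and "A \<subseteq> B"
    and null: "\<gamma> B = eps 0"
  shows "\<gamma> A = eps 0"
proof (rule antisym)
  show "\<gamma> A \<le> eps 0"
    using dm A by (auto simp: decomposable_measure_def intro: Delta_plus_le_eps_zero)
  show "eps 0 \<le> \<gamma> A"
    using decomposable_measure_antimono[OF tf dm ring A B \<open>A \<subseteq> B\<close>] null by simp
qed

lemma decomposable_measure_Diff_null:
  assumes tf: "triangle_function \<tau>" and dm: "decomposable_measure \<tau> S \<gamma>"
    and ring: "ring_of_sets \<Omega> S" and A: "A \<in> S" and F: "F \<in> S" and null: "\<gamma> F = eps 0"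
  shows "\<gamma> (A - F) = \<gamma> A"
proof -
  interpret ring_of_sets \<Omega> S by (fact ring)
  have AF: "A - F \<in> S" and AiF: "A \<inter> F \<in> S"
    using A F by auto
  have \<gamma>AF: "\<gamma> (A - F) \<in> Delta_plus"
    using dm AF by (simp add: decomposable_measure_def)
  have "\<gamma> A = \<gamma> ((A - F) \<union> (A \<inter> F))"
    by (simp add: Un_Diff_Int)
  also have "\<dots> = \<tau> (\<gamma> (A - F)) (\<gamma> (A \<inter> F))"
    using dm AF AiF by (auto simp: decomposable_measure_def)
  also have "\<gamma> (A \<inter> F) = eps 0"
    using decomposable_measure_null_subset[OF tf dm ring AiF F _ null] by blast
  also have "\<tau> (\<gamma> (A - F)) (eps 0) = \<gamma> (A - F)"
    using tf \<gamma>AF unfolding triangle_function_def by blast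
  finally show ?thesis by (rule sym)
qed

lemma sfun_map_Diff:
  "sfun (map (\<lambda>(x, A). (x, A - F)) r) \<omega> = (if \<omega> \<in> F then 0 else sfun r \<omega>)"
  by (induction r) (auto simp: sfun_def indicator_def split: prod.splits)

lemma simple_rep_map_Diff:
  assumes ring: "ring_of_sets \<Omega> S" and r: "simple_rep S r" and F: "F \<in> S"
  shows "simple_rep S (map (\<lambda>(x, A). (x, A - F)) r)"
  using r F ring_of_sets.Diff[OF ring]
  unfolding simple_rep_def by (fastforce simp: case_prod_beta)

lemma simple_int_map_Diff_null:
  assumes tf: "triangle_function \<tau>" and dm: "decomposable_measure \<tau> S \<gamma>"
    and ring: "ring_of_sets \<Omega> S" and E: "E \<in> S" and r: "simple_rep S r"
    and F: "F \<in> S" and null: "\<gamma> F = eps 0"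
  shows "simple_int \<tau> \<gamma> E (map (\<lambda>(x, A). (x, A - F)) r) = simple_int \<tau> \<gamma> E r"
  unfolding simple_int_def map_map
proof (rule arg_cong[where f = "oplus \<tau>"], rule map_cong[OF refl])
  interpret ring_of_sets \<Omega> S by (fact ring)
  fix p
  assume "p \<in> set r"
  moreover obtain x A where p: "p = (x, A)"
    by (cases p)
  ultimately have "E \<inter> A \<in> S"
    using r E unfolding simple_rep_def by auto
  then have "\<gamma> (E \<inter> A - F) = \<gamma> (E \<inter> A)"
    using decomposable_measure_Diff_null[OF tf dm ring _ F null] by blast
  then show "((\<lambda>(x, A). smult x (\<gamma> (E \<inter> A))) \<circ> (\<lambda>(x, A). (x, A - F))) p =
      (\<lambda>(x, A). smult x (\<gamma> (E \<inter> A))) p"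
    using p by (simp add: Int_Diff)
qed

lemma simple_ints_subset_if_ae_eq:
  assumes tf: "triangle_function \<tau>" and dm: "decomposable_measure \<tau> S \<gamma>"
    and ring: "ring_of_sets \<Omega> S" and E: "E \<in> S" and ae: "ae_eq_on S \<gamma> E f g"
  shows "simple_ints \<tau> S \<gamma> f E \<subseteq> simple_ints \<tau> S \<gamma> g E"
proof
  fix K
  assume "K \<in> simple_ints \<tau> S \<gamma> f E"
  then obtain r where K: "K = simple_int \<tau> \<gamma> E r" and r: "simple_rep S r"
    and le_f: "\<forall>\<omega>\<in>E. ennreal (sfun r \<omega>) \<le> f \<omega>"
    unfolding simple_ints_def by blast
  obtain F where F: "F \<in> S" and null: "\<gamma> F = eps 0" and eq: "\<forall>\<omega>\<in>E - F. f \<omega> = g \<omega>"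
    using ae unfolding ae_eq_on_def by blast
  define r' where "r' = map (\<lambda>(x, A). (x, A - F)) r"
  have "simple_rep S r'"
    unfolding r'_def using ring r F by (rule simple_rep_map_Diff)
  moreover have "\<forall>\<omega>\<in>E. ennreal (sfun r' \<omega>) \<le> g \<omega>"
    using le_f eq unfolding r'_def sfun_map_Diff by auto
  moreover have "K = simple_int \<tau> \<gamma> E r'"
    unfolding K r'_def using simple_int_map_Diff_null[OF tf dm ring E r F null] by simp
  ultimately show "K \<in> simple_ints \<tau> S \<gamma> g E"
    unfolding simple_ints_def by blast
qed

lemma ae_eq_on_sym: "ae_eq_on S \<gamma> E f g \<Longrightarrow> ae_eq_on S \<gamma> E g f"
  unfolding ae_eq_on_def by fastforce

theorem theorem5p10:
  fixes \<tau> :: "dfun \<Rightarrow> dfun \<Rightarrow> dfun"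
    and \<Omega> :: "'a set" and S :: "'a set set"
    and \<gamma> :: "'a set \<Rightarrow> dfun"
    and E :: "'a set" and f g :: "'a \<Rightarrow> ennreal"
  assumes "triangle_function \<tau>" and "continuous_tf \<tau>" and "distributive_tf \<tau>"
    and "\<Omega> \<noteq> {}" and "sigma_ring \<Omega> S"
    and "decomposable_measure \<tau> S \<gamma>" and "continuous_from_below S \<gamma>"
    and "E \<in> S"
    and "measurable_fn \<Omega> S f" and "measurable_fn \<Omega> S g"
    and "gamma_integrable \<tau> S \<gamma> f E" and "gamma_integrable \<tau> S \<gamma> g E"
    and "ae_eq_on S \<gamma> E f g"
  shows "gamma_integral \<tau> S \<gamma> f E = gamma_integral \<tau> S \<gamma> g E"
proof -
  have ring: "ring_of_sets \<Omega> S"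
    using \<open>sigma_ring \<Omega> S\<close> by (simp add: sigma_ring_def)
  note subset = simple_ints_subset_if_ae_eq[OF \<open>triangle_function \<tau>\<close>
      \<open>decomposable_measure \<tau> S \<gamma>\<close> ring \<open>E \<in> S\<close>]
  have "simple_ints \<tau> S \<gamma> f E = simple_ints \<tau> S \<gamma> g E"
    using subset[OF \<open>ae_eq_on S \<gamma> E f g\<close>] subset[OF ae_eq_on_sym[OF \<open>ae_eq_on S \<gamma> E f g\<close>]]
    by (rule subset_antisym)
  then show ?thesis
    unfolding gamma_integral_def by simp
qed

end
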